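(* Let $k\ge 3$ and $p=1+k+k(k-1)/2$. In the $k$-dimensional Poisson regression model with first-order interactions, let $\boldsymbol{\beta}$ have $\beta_0=0$, $\beta_1=\dots=\beta_k=-1$ and $\beta_{ij}=0$ for all $1\le i<j\le k$. Let $\mathbf{x}_0=(0,\dots,0)$, let $\mathbf{x}_i=2\mathbf{e}_i$ for $i=1,\dots,k$ (where $\mathbf{e}_i$ is the $i$-th unit vector), and let $\mathbf{x}_{ij}=\mathbf{x}_i+\mathbf{x}_j$ for $1\le i<j\le k$. Then the design which assigns equal weights $1/p$ to these $p$ settings is locally $D$-optimal at $\boldsymbol{\beta}$ on $\mathcal{X}=[0,\infty)^k$.
   Context: In the $k$-dimensional Poisson regression model with first-order interactions, an observation at $\mathbf{x}=(x_1,\dots,x_k)$ is Poisson distributed with mean $\lambda(\mathbf{x})=\exp(\mathbf{f}(\mathbf{x})^\top\boldsymbol{\beta})$, where $\mathbf{f}(\mathbf{x})=(1,x_1,\dots,x_k,(x_ix_j)_{1\le i<j\le k})^\top$, so $\mathbf{f}(\mathbf{x})^\top\boldsymbol{\beta}=\beta_0+\sum_j\beta_jx_j+\sum_{i<j}\beta_{ij}x_ix_j$. A design $\xi$ is a finite collection of distinct settings $\mathbf{x}_i\in\mathcal{X}$ with weights $w_i\ge0$ summing to $1$; its information matrix is $\mathbf{M}_{\boldsymbol{\beta}}(\xi)=\sum_i w_i\lambda(\mathbf{x}_i)\mathbf{f}(\mathbf{x}_i)\mathbf{f}(\mathbf{x}_i)^\top$. A design is locally $D$-optimal at $\boldsymbol{\beta}$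 on $\mathcal{X}$ if it maximizes $\det\mathbf{M}_{\boldsymbol{\beta}}(\xi)$ over all designs on $\mathcal{X}$. *)

theory Defs
  imports "HOL-Analysis.Analysis"
begin

text \<open>Points of the design space are vectors in \<open>real ^ 'n\<close>, so \<open>k = CARD('n)\<close>.
  The regression functions of the model with first-order interactions are indexed by the
  subsets \<open>S\<close> of the coordinate set with \<open>card S \<le> 2\<close>:
  \<open>S = {}\<close> gives the constant 1, \<open>S = {i}\<close> gives \<open>x_i\<close>, \<open>S = {i,j}\<close> (i \<noteq> j) gives \<open>x_i x_j\<close>.\<close>

definition idx :: "'n::finite set set" where
  "idx = {S. card S \<le> 2}"

definition regf :: "'n::finite set \<Rightarrow> real ^ 'n \<Rightarrow> real" where
  "regf S x = (\<Prod>i\<in>S. x $ i)"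

definition intensity :: "('n::finite set \<Rightarrow> real) \<Rightarrow> real ^ 'n \<Rightarrow> real" where
  "intensity \<beta> x = exp (\<Sum>S\<in>idx. \<beta> S * regf S x)"

definition info_matrix ::
  "('n::finite set \<Rightarrow> real) \<Rightarrow> (real ^ 'n) set \<Rightarrow> (real ^ 'n \<Rightarrow> real) \<Rightarrow> 'n set \<Rightarrow> 'n set \<Rightarrow> real" where
  "info_matrix \<beta> D w = (\<lambda>S T. \<Sum>x\<in>D. w x * intensity \<beta> x * regf S x * regf T x)"

definition det_on :: "'a set \<Rightarrow> ('a \<Rightarrow> 'a \<Rightarrow> real) \<Rightarrow> real" where
  "det_on I A = (\<Sum>\<pi>\<in>{\<pi>. \<pi> permutes I}. of_int (sign \<pi>) * (\<Prod>i\<in>I. A i (\<pi> i)))"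

definition is_design :: "(real ^ 'n) set \<Rightarrow> (real ^ 'n) set \<Rightarrow> (real ^ 'n \<Rightarrow> real) \<Rightarrow> bool" where
  "is_design X D w \<longleftrightarrow> finite D \<and> D \<subseteq> X \<and> (\<forall>x\<in>D. w x \<ge> 0) \<and> sum w D = 1"

definition locally_D_optimal ::
  "('n::finite set \<Rightarrow> real) \<Rightarrow> (real ^ 'n) set \<Rightarrow> (real ^ 'n) set \<Rightarrow> (real ^ 'n \<Rightarrow> real) \<Rightarrow> bool" where
  "locally_D_optimal \<beta> X D w \<longleftrightarrow> is_design X D w \<and>
     (\<forall>D' w'. is_design X D' w' \<longrightarrow>
        det_on idx (info_matrix \<beta> D' w') \<le> det_on idx (info_matrix \<beta> D w))"

end

(*
  Let l_U (U in idx) be the Lagrange basis of the model space for the nodes 1_U (indicator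
  vectors), so that every regression function interpolates as f_S(x) = sum_U l_U(x/2) f_S(2 1_U).
  Hence M(xi) = F^T N(xi) F with F_{U,S} = f_S(2 1_U) and
  N(xi)_{UV} = sum_x w(x) lambda(x) l_U(x/2) l_V(x/2), so only det N(xi) depends on the design.
  For the uniform design on the nodes 2 1_U the matrix N is diagonal with entries lambda(2 1_U)/p.
  For any design, Hadamard's inequality and AM-GM bound det N(xi) by
  prod_U lambda(2 1_U) * (sum_U d_U / p)^p with d_U = N(xi)_{UU} / lambda(2 1_U), and
  sum_U d_U <= 1 follows from the pointwise bound lambda(x) sum_U l_U(x/2)^2 / lambda(2 1_U) <= 1.
  With y = x/2 this bound reads Phi(y) <= exp(2 sum_i y_i) for a polynomial Phi in the first four
  power sums of y. Moving mass between two positive coordinates makes Phi a strictly convex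
  function of the squared half-difference, so a maximiser of Phi on a simplex has all positive
  coordinates equal, and the bound reduces to inequalities in one variable.
*)

theory Submission
  imports Defs "Jordan_Normal_Form.Determinant"
begin

(* Matrix indexing of Jordan_Normal_Form would clash with the components x $ i of real^'n. *)
no_notation Matrix.vec_index (infixl "$" 100)

lemma sum_Pow_neg_one_power_card:
  assumes "finite A"
  shows "(\<Sum>T\<in>Pow A. (-1::'a::ring_1) ^ card T) = (if A = {} then 1 else 0)"
proof (cases "A = {}")
  case False
  have "card {T. T \<in> Pow A \<and> even (card T)} = card {T. T \<in> Pow A \<and> odd (card T)}"
    using card_subsupersets_even_odd[of A "{}"] assms False by auto
  then show ?thesis using assms False by (simp add: sum_alternating_cancels)
qed simp

lemma sum_interval_neg_one_power_card_diff_lower: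
  assumes "finite W" "U \<subseteq> W"
  shows "(\<Sum>V | U \<subseteq> V \<and> V \<subseteq> W. (-1::'a::ring_1) ^ card (V - U)) = (if U = W then 1 else 0)"
proof -
  have "bij_betw (\<lambda>V. V - U) {V. U \<subseteq> V \<and> V \<subseteq> W} (Pow (W - U))"
    by (rule bij_betw_byWitness[where f' = "\<lambda>T. T \<union> U"]) (use assms in auto)
  then have "(\<Sum>V | U \<subseteq> V \<and> V \<subseteq> W. (-1::'a) ^ card (V - U)) = (\<Sum>T\<in>Pow (W - U). (-1) ^ card T)"
    by (rule sum.reindex_bij_betw)
  then show ?thesis using assms by (simp add: sum_Pow_neg_one_power_card)
qed

lemma sum_interval_neg_one_power_card_diff_upper:
  assumes "finite W" "U \<subseteq> W"
  shows "(\<Sum>V | U \<subseteq> V \<and> V \<subseteq> W. (-1::'a::ring_1) ^ card (W - V)) = (if U = W then 1 else 0)"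
proof -
  have "bij_betw (\<lambda>V. W - V) {V. U \<subseteq> V \<and> V \<subseteq> W} (Pow (W - U))"
    by (rule bij_betw_byWitness[where f' = "\<lambda>T. W - T"]) (use assms in auto)
  then have "(\<Sum>V | U \<subseteq> V \<and> V \<subseteq> W. (-1::'a) ^ card (W - V)) = (\<Sum>T\<in>Pow (W - U). (-1) ^ card T)"
    by (rule sum.reindex_bij_betw)
  then show ?thesis using assms by (simp add: sum_Pow_neg_one_power_card)
qed

lemma sum_card2_subsets_prod:
  fixes a :: "'a \<Rightarrow> real"
  assumes "finite A"
  shows "(\<Sum>V | V \<subseteq> A \<and> card V = 2. \<Prod>i\<in>V. a i) = ((\<Sum>i\<in>A. a i)^2 - (\<Sum>i\<in>A. (a i)^2)) / 2"
  using assms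
proof (induction A rule: finite_induct)
  case empty
  have "{V. V \<subseteq> {} \<and> card V = 2} = ({} :: 'a set set)" by auto
  then show ?case by simp
next
  case (insert b A)
  define P where "P = {V. V \<subseteq> A \<and> card V = 2}"
  have split: "{V. V \<subseteq> insert b A \<and> card V = 2} = P \<union> (\<lambda>j. {b, j}) ` A"
  proof (intro equalityI subsetI)
    fix V assume "V \<in> {V. V \<subseteq> insert b A \<and> card V = 2}"
    then obtain x y where "V = {x, y}" "x \<noteq> y" "V \<subseteq> insert b A" by (auto simp: card_2_iff)
    then show "V \<in> P \<union> (\<lambda>j. {b, j}) ` A"
      using insert.hyps by (cases "b \<in> V") (auto simp: P_def insert_commute)
  qed (use insert.hyps in \<open>auto simp: P_def card_insert_if\<close>)
  have inj: "inj_on (\<lambda>j. {b, j}) A" using insert.hyps by (auto simp: inj_on_def doubleton_eq_iff)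
  have "(\<Sum>V | V \<subseteq> insert b A \<and> card V = 2. \<Prod>i\<in>V. a i)
      = (\<Sum>V\<in>P. \<Prod>i\<in>V. a i) + (\<Sum>j\<in>A. \<Prod>i\<in>{b, j}. a i)"
    unfolding split using insert.hyps
    by (subst sum.union_disjoint) (auto simp: P_def sum.reindex[OF inj])
  also have "(\<Sum>j\<in>A. \<Prod>i\<in>{b, j}. a i) = a b * (\<Sum>j\<in>A. a j)"
    using insert.hyps by (auto simp: sum_distrib_left prod.insert_if intro!: sum.cong)
  finally show ?case
    using insert by (simp add: P_def power2_eq_square field_simps)
qed

lemma prod_le_mean_power:
  fixes x :: "'a \<Rightarrow> real"
  assumes "finite S" and nonneg: "\<And>i. i \<in> S \<Longrightarrow> 0 \<le> x i"
  shows "(\<Prod>i\<in>S. x i) \<le> ((\<Sum>i\<in>S. x i) / card S) ^ card S"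
proof (cases "S = {}")
  case False
  define P where "P = (\<Prod>i\<in>S. x i)"
  have P: "0 \<le> P" unfolding P_def using nonneg by (simp add: prod_nonneg)
  have n: "0 < card S" using assms False by (simp add: card_gt_0_iff)
  have "P powr (1 / card S) \<le> (\<Sum>i\<in>S. x i) / card S"
    using arith_geom_mean[OF assms(1) False nonneg] by (simp add: P_def sum_divide_distrib)
  then have "(P powr (1 / card S)) ^ card S \<le> ((\<Sum>i\<in>S. x i) / card S) ^ card S"
    by (rule power_mono) simp
  also have "(P powr (1 / card S)) ^ card S = P"
  proof (cases "P = 0")
    case False
    then have "(P powr (1 / card S)) ^ card S = (P powr (1 / card S)) powr card S"
      using P by (simp add: powr_realpow)
    then show ?thesis using n P by (simp add: powr_powr)
  qed (use n in simp)
  finally show ?thesis by (simp add: P_def)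
qed simp

lemma det_on_eq_det:
  assumes e: "bij_betw e {0..<n} I"
  shows "det_on I A = det (mat n n (\<lambda>(i, j). A (e i) (e j)))"
proof -
  have inj: "inj_on e {0..<n}" and img: "e ` {0..<n} = I" using e by (auto simp: bij_betw_def)
  define h where "h \<sigma> = map_permutation {0..<n} e \<sigma>" for \<sigma>
  have "h = (\<lambda>\<sigma> x. if x \<in> I then e (\<sigma> (inv_into {0..<n} e x)) else x)"
    unfolding h_def map_permutation_def restrict_id_def img by (auto simp: fun_eq_iff)
  then have h: "bij_betw h {\<sigma>. \<sigma> permutes {0..<n}} {\<pi>. \<pi> permutes I}"
    using bij_betw_permutations[OF e] by simp
  have "det_on I A = (\<Sum>\<sigma> | \<sigma> permutes {0..<n}. of_int (sign (h \<sigma>)) * (\<Prod>u\<in>I. A u (h \<sigma> u)))"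
    unfolding det_on_def by (rule sum.reindex_bij_betw[OF h, symmetric])
  also have "\<dots> = (\<Sum>\<sigma> | \<sigma> permutes {0..<n}. of_int (sign \<sigma>) * (\<Prod>i\<in>{0..<n}. A (e i) (e (\<sigma> i))))"
  proof (intro sum.cong refl)
    fix \<sigma> assume "\<sigma> \<in> {\<sigma>. \<sigma> permutes {0..<n}}"
    then have \<sigma>: "\<sigma> permutes {0..<n}" by simp
    have "sign (h \<sigma>) = sign \<sigma>" unfolding h_def by (rule sign_map_permutation[OF inj \<sigma>]) simp
    moreover have "(\<Prod>u\<in>I. A u (h \<sigma> u)) = (\<Prod>i\<in>{0..<n}. A (e i) (e (\<sigma> i)))"
      using inj by (simp add: prod.reindex_bij_betw[OF e, symmetric] h_def map_permutation_apply)
    ultimately show "of_int (sign (h \<sigma>)) * (\<Prod>u\<in>I. A u (h \<sigma> u))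
        = of_int (sign \<sigma>) * (\<Prod>i\<in>{0..<n}. A (e i) (e (\<sigma> i)))"
      by simp
  qed
  also have "\<dots> = det (mat n n (\<lambda>(i, j). A (e i) (e j)))"
    by (subst det_def'[of _ n]) (auto intro!: sum.cong prod.cong simp: permutes_in_image)
  finally show ?thesis .
qed

lemma mat_reindex_mult:
  assumes e: "bij_betw e {0..<n} I"
  shows "mat n n (\<lambda>(i, j). \<Sum>k\<in>I. A (e i) k * B k (e j))
    = mat n n (\<lambda>(i, j). A (e i) (e j)) * mat n n (\<lambda>(i, j). B (e i) (e j))"
  by (rule eq_matI) (auto simp: scalar_prod_def sum.reindex_bij_betw[OF e, symmetric] atLeast0LessThan)

lemma det_on_mult:
  assumes "finite I"
  shows "det_on I (\<lambda>i j. \<Sum>k\<in>I. A i k * B k j) = det_on I A * det_on I B"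
proof -
  obtain e where e: "bij_betw e {0..<card I} I" using ex_bij_betw_nat_finite[OF assms] by blast
  show ?thesis
    unfolding det_on_eq_det[OF e] mat_reindex_mult[OF e] by (rule det_mult) auto
qed

lemma det_on_transpose:
  assumes "finite I"
  shows "det_on I (\<lambda>i j. A j i) = det_on I A"
proof -
  obtain e where e: "bij_betw e {0..<card I} I" using ex_bij_betw_nat_finite[OF assms] by blast
  have "mat (card I) (card I) (\<lambda>(i, j). A (e j) (e i))
      = transpose_mat (mat (card I) (card I) (\<lambda>(i, j). A (e i) (e j)))"
    by (rule eq_matI) auto
  then show ?thesis
    unfolding det_on_eq_det[OF e] by (simp add: det_transpose[of _ "card I"])
qed

lemma det_on_diagonal:
  assumes "finite I"
  shows "det_on I (\<lambda>i j. if i = j then d i else 0) = (\<Prod>i\<in>I. d i)"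
proof -
  obtain e where e: "bij_betw e {0..<card I} I" using ex_bij_betw_nat_finite[OF assms] by blast
  then have inj: "inj_on e {0..<card I}" by (simp add: bij_betw_def)
  let ?D = "mat (card I) (card I) (\<lambda>(i, j). if e i = e j then d (e i) else 0)"
  have "upper_triangular ?D"
  proof
    fix i j assume "j < i" "i < dim_row ?D"
    then have "e i \<noteq> e j" using inj_on_eq_iff[OF inj, of i j] by auto
    with \<open>j < i\<close> \<open>i < dim_row ?D\<close> show "?D $$ (i, j) = 0" by simp
  qed
  then have "det ?D = prod_list (diag_mat ?D)" by (rule det_upper_triangular[of _ "card I"]) simp
  also have "\<dots> = (\<Prod>i\<in>{0..<card I}. d (e i))" by (simp add: prod_list_diag_prod)
  also have "\<dots> = (\<Prod>i\<in>I. d i)" by (rule prod.reindex_bij_betw[OF e])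
  finally show ?thesis by (simp add: det_on_eq_det[OF e])
qed

lemma det_on_cong:
  assumes "\<And>i j. i \<in> I \<Longrightarrow> j \<in> I \<Longrightarrow> A i j = B i j"
  shows "det_on I A = det_on I B"
  unfolding det_on_def using assms
  by (intro sum.cong refl arg_cong2[where f = "(*)"] prod.cong) (auto simp: permutes_in_image)

section \<open>Hadamard's inequality for Gram matrices\<close>

definition gram_mat :: "nat \<Rightarrow> 'x set \<Rightarrow> ('x \<Rightarrow> real) \<Rightarrow> ('x \<Rightarrow> nat \<Rightarrow> real) \<Rightarrow> real mat" where
  "gram_mat n X c v = mat n n (\<lambda>(i, j). \<Sum>x\<in>X. c x * v x i * v x j)"

lemma gram_mat_carrier [simp]: "gram_mat n X c v \<in> carrier_mat n n"
  by (simp add: gram_mat_def)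

lemma gram_mat_index [simp]: "i < n \<Longrightarrow> j < n \<Longrightarrow> gram_mat n X c v $$ (i, j) = (\<Sum>x\<in>X. c x * v x i * v x j)"
  by (simp add: gram_mat_def)

lemma sum_Schur_complement:
  fixes v :: "'x \<Rightarrow> nat \<Rightarrow> real"
  assumes a: "a = (\<Sum>x\<in>X. c x * (v x n)^2)" "a \<noteq> 0" and b: "\<And>i. b i = (\<Sum>x\<in>X. c x * v x i * v x n)"
  shows "(\<Sum>x\<in>X. c x * (v x i - b i / a * v x n) * (v x j - b j / a * v x n))
    = (\<Sum>x\<in>X. c x * v x i * v x j) - b i * b j / a"
proof -
  have "(\<Sum>x\<in>X. c x * (v x i - b i / a * v x n) * (v x j - b j / a * v x n))
      = (\<Sum>x\<in>X. c x * v x i * v x j) - b j / a * (\<Sum>x\<in>X. c x * v x i * v x n)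
        - b i / a * (\<Sum>x\<in>X. c x * v x j * v x n) + b i / a * (b j / a) * (\<Sum>x\<in>X. c x * (v x n)^2)"
    by (simp add: sum_subtractf sum.distrib sum_distrib_left algebra_simps power2_eq_square)
  also have "\<dots> = (\<Sum>x\<in>X. c x * v x i * v x j) - b i * b j / a"
    unfolding b[symmetric] a(1)[symmetric] using a(2) by (simp add: field_simps power2_eq_square)
  finally show ?thesis .
qed

definition last_col_elim_mat :: "nat \<Rightarrow> (nat \<Rightarrow> 'a::comm_ring_1) \<Rightarrow> 'a mat" where
  "last_col_elim_mat n r = mat (Suc n) (Suc n) (\<lambda>(i, j). if i = j then 1 else if j = n then - r i else 0)"

lemma last_col_elim_mat_carrier [simp]: "last_col_elim_mat n r \<in> carrier_mat (Suc n) (Suc n)"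
  by (simp add: last_col_elim_mat_def)

lemma det_last_col_elim_mat [simp]: "det (last_col_elim_mat n r) = 1"
proof -
  have "upper_triangular (last_col_elim_mat n r)" by (auto simp: last_col_elim_mat_def)
  then show ?thesis
    using det_upper_triangular[OF _ last_col_elim_mat_carrier]
    by (simp add: prod_list_diag_prod last_col_elim_mat_def)
qed

lemma last_col_elim_mat_mult_index:
  assumes "G \<in> carrier_mat (Suc n) (Suc n)" "i < Suc n" "j < Suc n"
  shows "(last_col_elim_mat n r * G) $$ (i, j)
    = (if i = n then G $$ (n, j) else G $$ (i, j) - r i * G $$ (n, j))"
proof -
  have "(last_col_elim_mat n r * G) $$ (i, j)
      = (\<Sum>k\<in>{0..<Suc n}. last_col_elim_mat n r $$ (i, k) * G $$ (k, j))"
    using assms carrier_matD[OF last_col_elim_mat_carrier, of n r]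
    by (simp add: index_mult_mat scalar_prod_def carrier_matD del: sum.op_ivl_Suc)
  also have "\<dots> = (\<Sum>k\<in>{0..<Suc n}. (if k = i then 1 else 0) * G $$ (k, j)
                    + (if i \<noteq> n \<and> k = n then - r i else 0) * G $$ (k, j))"
    using assms by (intro sum.cong) (auto simp: last_col_elim_mat_def algebra_simps)
  also have "\<dots> = G $$ (i, j) + (if i \<noteq> n then - r i * G $$ (n, j) else 0)"
    using assms by (simp add: sum.distrib if_distrib[of "\<lambda>z. z * _"] sum.delta')
  finally show ?thesis by auto
qed

lemma det_gram_mat_Suc:
  fixes v :: "'x \<Rightarrow> nat \<Rightarrow> real"
  assumes a: "a = (\<Sum>x\<in>X. c x * (v x n)^2)" "a \<noteq> 0" and b: "\<And>i. b i = (\<Sum>x\<in>X. c x * v x i * v x n)"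
  shows "det (gram_mat (Suc n) X c v) = a * det (gram_mat n X c (\<lambda>x i. v x i - b i / a * v x n))"
proof -
  define G where "G = gram_mat (Suc n) X c v"
  define L where "L = last_col_elim_mat n (\<lambda>i. b i / a)"
  have G: "G \<in> carrier_mat (Suc n) (Suc n)" and L: "L \<in> carrier_mat (Suc n) (Suc n)"
    by (simp_all add: G_def L_def)
  have Gn: "G $$ (i, n) = b i" "G $$ (n, i) = b i" if "i < Suc n" for i
    using that by (simp_all add: G_def b mult.commute mult.left_commute)
  have LG: "(L * G) $$ (i, j) = (if i = n then G $$ (n, j) else G $$ (i, j) - b i / a * G $$ (n, j))"
    if "i < Suc n" "j < Suc n" for i j
    unfolding L_def using G that by (rule last_col_elim_mat_mult_index)
  have LGC: "L * G \<in> carrier_mat (Suc n) (Suc n)" using L G by simp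
  have "det (L * G) = (\<Sum>i<Suc n. (L * G) $$ (i, n) * cofactor (L * G) i n)"
    by (rule laplace_expansion_column[OF LGC]) simp
  also have "\<dots> = a * det (mat_delete (L * G) n n)"
    using LG Gn a by (simp add: lessThan_Suc cofactor_def G_def power2_eq_square mult.assoc)
  also have "mat_delete (L * G) n n = gram_mat n X c (\<lambda>x i. v x i - b i / a * v x n)"
  proof (rule eq_matI)
    fix i j assume "i < dim_row (gram_mat n X c (\<lambda>x i. v x i - b i / a * v x n))"
      "j < dim_col (gram_mat n X c (\<lambda>x i. v x i - b i / a * v x n))"
    then have ij: "i < n" "j < n" by (simp_all add: gram_mat_def)
    then have "mat_delete (L * G) n n $$ (i, j) = G $$ (i, j) - b i / a * b j"
      using LG[of i j] Gn[of j] carrier_matD[OF L] carrier_matD[OF G] by (simp add: mat_delete_def)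
    also have "\<dots> = (\<Sum>x\<in>X. c x * (v x i - b i / a * v x n) * (v x j - b j / a * v x n))"
      unfolding sum_Schur_complement[where X = X and c = c and v = v and n = n, OF a b]
      using ij by (simp add: G_def)
    finally show "mat_delete (L * G) n n $$ (i, j)
        = gram_mat n X c (\<lambda>x i. v x i - b i / a * v x n) $$ (i, j)"
      using ij by simp
  qed (use carrier_matD[OF L] carrier_matD[OF G] in \<open>simp_all add: gram_mat_def\<close>)
  finally have "det (L * G) = a * det (gram_mat n X c (\<lambda>x i. v x i - b i / a * v x n))" .
  moreover have "det (L * G) = det G" using det_mult[OF L G] by (simp add: L_def)
  ultimately show ?thesis by (simp add: G_def)
qed

lemma det_gram_mat_eq_0:
  fixes v :: "'x \<Rightarrow> nat \<Rightarrow> real"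
  assumes X: "finite X" and c: "\<And>x. x \<in> X \<Longrightarrow> 0 \<le> c x" and "(\<Sum>x\<in>X. c x * (v x n)^2) = 0"
  shows "det (gram_mat (Suc n) X c v) = 0"
proof -
  have cv: "c x * v x n = 0" if "x \<in> X" for x
    using sum_nonneg_eq_0_iff[OF X, of "\<lambda>x. c x * (v x n)^2"] assms(3) c that
    by (simp add: power2_eq_square)
  have "gram_mat (Suc n) X c v $$ (i, n) = 0" if "i < Suc n" for i
  proof -
    have "gram_mat (Suc n) X c v $$ (i, n) = (\<Sum>x\<in>X. c x * v x n * v x i)"
      using that by (simp add: ac_simps)
    also have "\<dots> = 0" by (simp add: sum.neutral cv)
    finally show ?thesis .
  qed
  then show ?thesis by (subst laplace_expansion_column[of _ "Suc n" n]) auto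
qed

lemma det_gram_mat_le_prod_diag:
  fixes v :: "'x \<Rightarrow> nat \<Rightarrow> real"
  assumes X: "finite X" and c: "\<And>x. x \<in> X \<Longrightarrow> 0 \<le> c x"
  shows "det (gram_mat n X c v) \<le> (\<Prod>i<n. \<Sum>x\<in>X. c x * (v x i)^2)"
proof (induction n arbitrary: v)
  case 0
  then show ?case by (simp add: gram_mat_def)
next
  case (Suc n)
  define a where "a = (\<Sum>x\<in>X. c x * (v x n)^2)"
  define b where "b i = (\<Sum>x\<in>X. c x * v x i * v x n)" for i
  have diag_nonneg: "0 \<le> (\<Sum>x\<in>X. c x * (w x i)^2)" for w i using c by (intro sum_nonneg) auto
  show ?case
  proof (cases "a = 0")
    case True
    then show ?thesis
      using det_gram_mat_eq_0[OF X c] prod_nonneg[OF diag_nonneg] by (simp add: a_def)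
  next
    case False
    then have "0 < a" using diag_nonneg[of v n] by (simp add: a_def)
    define w where "w x i = v x i - b i / a * v x n" for x i
    have "(\<Sum>x\<in>X. c x * (w x i)^2) \<le> (\<Sum>x\<in>X. c x * (v x i)^2)" for i
      using sum_Schur_complement[where X = X and c = c and v = v and n = n, OF a_def False b_def, of i i]
        \<open>0 < a\<close>
      by (simp add: w_def power2_eq_square mult.assoc)
    then have "(\<Prod>i<n. \<Sum>x\<in>X. c x * (w x i)^2) \<le> (\<Prod>i<n. \<Sum>x\<in>X. c x * (v x i)^2)"
      by (intro prod_mono) (simp add: diag_nonneg)
    moreover have "det (gram_mat (Suc n) X c v) = a * det (gram_mat n X c w)"
      unfolding w_def
      by (rule det_gram_mat_Suc[where X = X and c = c and v = v and n = n, OF a_def False b_def])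
    ultimately show ?thesis
      using Suc.IH[of w] \<open>0 < a\<close> diag_nonneg
      by (simp add: a_def mult_left_mono order.trans[OF mult_left_mono])
  qed
qed

theorem det_on_gram_le_prod_diag:
  fixes v :: "'x \<Rightarrow> 'i \<Rightarrow> real"
  assumes "finite I" "finite X" and "\<And>x. x \<in> X \<Longrightarrow> 0 \<le> c x"
  shows "det_on I (\<lambda>i j. \<Sum>x\<in>X. c x * v x i * v x j) \<le> (\<Prod>i\<in>I. \<Sum>x\<in>X. c x * (v x i)^2)"
proof -
  obtain e where e: "bij_betw e {0..<card I} I" using ex_bij_betw_nat_finite[OF assms(1)] by blast
  have "det_on I (\<lambda>i j. \<Sum>x\<in>X. c x * v x i * v x j) = det (gram_mat (card I) X c (\<lambda>x k. v x (e k)))"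
    unfolding det_on_eq_det[OF e] gram_mat_def ..
  also have "\<dots> \<le> (\<Prod>k<card I. \<Sum>x\<in>X. c x * (v x (e k))^2)"
    using assms(2,3) by (rule det_gram_mat_le_prod_diag)
  also have "\<dots> = (\<Prod>i\<in>I. \<Sum>x\<in>X. c x * (v x i)^2)"
    unfolding lessThan_atLeast0 by (rule prod.reindex_bij_betw[OF e])
  finally show ?thesis .
qed

section \<open>The sensitivity function\<close>

lemma five_le_exp2: "5 \<le> exp (2::real)"
  using exp_lower_Taylor_quadratic[of 2] by simp

definition one_coord_ratio :: "real \<Rightarrow> real" where
  "one_coord_ratio t = ((1 - t)^2 + exp 2 * t^2) * exp (-2 * t)"

lemma one_coord_ratio_deriv:
  "DERIV one_coord_ratio t :> 2 * exp (-2 * t) * ((1 - t) * ((exp 2 + 1) * t - 2))"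
proof -
  have "DERIV one_coord_ratio t :> (2 * (1 - t) * (-1) + exp 2 * (2 * t)) * exp (-2 * t)
      + ((1 - t)^2 + exp 2 * t^2) * (exp (-2 * t) * (-2))"
    unfolding one_coord_ratio_def[abs_def] by (auto intro!: derivative_eq_intros)
  then show ?thesis by (simp add: algebra_simps power2_eq_square)
qed

lemma one_coord_ratio_antimono:
  assumes "a \<le> b" and sign: "\<And>t. a \<le> t \<Longrightarrow> t \<le> b \<Longrightarrow> (1 - t) * ((exp 2 + 1) * t - 2) \<le> 0"
  shows "one_coord_ratio b \<le> one_coord_ratio a"
  using assms(1)
proof (rule DERIV_nonpos_imp_nonincreasing)
  fix t assume "a \<le> t" "t \<le> b"
  have "2 * exp (-2 * t) * ((1 - t) * ((exp 2 + 1) * t - 2)) \<le> 0"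
    by (rule mult_nonneg_nonpos) (use sign \<open>a \<le> t\<close> \<open>t \<le> b\<close> in auto)
  then show "\<exists>y. DERIV one_coord_ratio t :> y \<and> y \<le> 0" using one_coord_ratio_deriv by blast
qed

lemma one_coord_ratio_mono:
  assumes "a \<le> b" and sign: "\<And>t. a \<le> t \<Longrightarrow> t \<le> b \<Longrightarrow> 0 \<le> (1 - t) * ((exp 2 + 1) * t - 2)"
  shows "one_coord_ratio a \<le> one_coord_ratio b"
  using assms(1)
proof (rule DERIV_nonneg_imp_nondecreasing)
  fix t assume "a \<le> t" "t \<le> b"
  have "0 \<le> 2 * exp (-2 * t) * ((1 - t) * ((exp 2 + 1) * t - 2))"
    by (rule mult_nonneg_nonneg) (use sign \<open>a \<le> t\<close> \<open>t \<le> b\<close> in auto)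
  then show "\<exists>y. DERIV one_coord_ratio t :> y \<and> 0 \<le> y" using one_coord_ratio_deriv by blast
qed

lemma one_coord_ratio_le_1:
  assumes "0 \<le> t"
  shows "one_coord_ratio t \<le> 1"
proof -
  have E: "5 \<le> exp (2::real)" by (rule five_le_exp2)
  have at_0: "one_coord_ratio 0 = 1" and at_1: "one_coord_ratio 1 = 1"
    by (simp_all add: one_coord_ratio_def exp_minus)
  \<comment> \<open>The ratio decreases on \<open>[0, 2/(e\<^sup>2+1)]\<close>, increases on \<open>[2/(e\<^sup>2+1), 1]\<close> and decreases on \<open>[1, \<infinity>)\<close>.\<close>
  consider "(exp 2 + 1) * t \<le> 2" | "2 < (exp 2 + 1) * t" "t \<le> 1" | "1 < t" by linarith
  then show ?thesis
  proof cases
    case 1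
    have "6 * t \<le> (exp 2 + 1) * t" using E assms by (intro mult_right_mono) auto
    have "one_coord_ratio t \<le> one_coord_ratio 0"
    proof (rule one_coord_ratio_antimono)
      fix x assume "0 \<le> x" "x \<le> t"
      have "(exp 2 + 1) * x \<le> (exp 2 + 1) * t" using \<open>x \<le> t\<close> E by (intro mult_left_mono) auto
      then show "(1 - x) * ((exp 2 + 1) * x - 2) \<le> 0"
        using 1 \<open>6 * t \<le> (exp 2 + 1) * t\<close> \<open>x \<le> t\<close> by (intro mult_nonneg_nonpos) auto
    qed (use assms in simp)
    then show ?thesis using at_0 by simp
  next
    case 2
    have "one_coord_ratio t \<le> one_coord_ratio 1"
    proof (rule one_coord_ratio_mono)
      fix x assume "t \<le> x" "x \<le> 1"
      have "(exp 2 + 1) * t \<le> (exp 2 + 1) * x" using \<open>t \<le> x\<close> E by (intro mult_left_mono) auto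
      then show "0 \<le> (1 - x) * ((exp 2 + 1) * x - 2)"
        using 2 \<open>x \<le> 1\<close> by (intro mult_nonneg_nonneg) auto
    qed (use 2 in simp)
    then show ?thesis using at_1 by simp
  next
    case 3
    have "one_coord_ratio t \<le> one_coord_ratio 1"
    proof (rule one_coord_ratio_antimono)
      fix x assume "1 \<le> x" "x \<le> t"
      have "exp 2 + 1 \<le> (exp 2 + 1) * x" using mult_left_mono[of 1 x "exp 2 + 1"] \<open>1 \<le> x\<close> E by simp
      then have "2 \<le> (exp 2 + 1) * x" using E by linarith
      then show "(1 - x) * ((exp 2 + 1) * x - 2) \<le> 0"
        using \<open>1 \<le> x\<close> by (intro mult_nonpos_nonneg) auto
    qed (use 3 in simp)
    then show ?thesis using at_1 by simp
  qed
qed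

lemma sq_one_minus_add_exp2_sq_le_exp:
  fixes t :: real
  assumes "0 \<le> t"
  shows "(1 - t)^2 + exp 2 * t^2 \<le> exp (2 * t)"
  using one_coord_ratio_le_1[OF assms] by (simp add: one_coord_ratio_def exp_minus field_simps)

(* sum_U e^(2 card U) (lagrange U y)^2 expressed through the power sums s, p_2, p_3, p_4 of y;
   see sum_exp2_lagrange_sq_eq_sens. *)
definition sens_poly :: "real \<Rightarrow> real \<Rightarrow> real \<Rightarrow> real \<Rightarrow> real" where
  "sens_poly s p\<^sub>2 p\<^sub>3 p\<^sub>4 = (1 - s + (s^2 - p\<^sub>2) / 2)^2
     + exp 2 * ((1 - s)^2 * p\<^sub>2 + 2 * (1 - s) * p\<^sub>3 + p\<^sub>4) + (exp 2)^2 * (p\<^sub>2^2 - p\<^sub>4) / 2"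

lemma sens_poly_one_coord: "sens_poly s (s^2) (s^3) (s^4) = (1 - s)^2 + exp 2 * s^2"
  unfolding sens_poly_def by (simp add: algebra_simps power2_eq_square power3_eq_cube power4_eq_xxxx)

lemma sens_poly_two_coords: "sens_poly s (s^2/2) (s^3/4) (s^4/8) = ((1 - s/2)^2 + exp 2 * (s/2)^2)^2"
  unfolding sens_poly_def
  by (simp add: field_simps) (simp add: algebra_simps power2_eq_square power3_eq_cube power4_eq_xxxx)

lemma sens_poly_le_two_coords:
  fixes s r :: real
  assumes "0 \<le> s" "0 \<le> r" "r \<le> 1/2"
  shows "sens_poly s (s^2 * r) (s^3 * r^2) (s^4 * r^3) \<le> sens_poly s (s^2/2) (s^3/4) (s^4/8)"
proof -
  define E where "E = exp (2::real)"
  have E: "5 \<le> E" unfolding E_def by (rule five_le_exp2)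
  define R where "R = (E - 1) * (1 - s/2)^2 + 2 * E * r * s
     + s^2 * ((1 - 2*r) * (E^2 - 1) / 8 + 2 * r * E * (E - 4) / 8 + E * (E - 2) / 2 * r * (1/2 - r))"
  have "sens_poly s (s^2/2) (s^3/4) (s^4/8) - sens_poly s (s^2 * r) (s^3 * r^2) (s^4 * r^3)
      = s^2 * (1/2 - r) * R"
    unfolding sens_poly_def R_def E_def
    by (simp add: field_simps) (simp add: algebra_simps power2_eq_square power3_eq_cube power4_eq_xxxx)
  moreover have "0 \<le> R"
    unfolding R_def using assms E by (intro add_nonneg_nonneg mult_nonneg_nonneg) auto
  then have "0 \<le> s^2 * (1/2 - r) * R" using assms by simp
  ultimately show ?thesis by linarith
qed

lemma sens_poly_equal_coords_le:
  fixes m :: nat and t :: real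
  assumes "1 \<le> m" "0 \<le> t"
  shows "sens_poly (m * t) (m * t^2) (m * t^3) (m * t^4) \<le> exp (2 * (m * t))"
proof (cases "m = 1")
  case True
  then show ?thesis using sq_one_minus_add_exp2_sq_le_exp[OF assms(2)] by (simp add: sens_poly_one_coord)
next
  case False
  define s where "s = real m * t"
  define r where "r = 1 / real m"
  have s: "0 \<le> s" using assms by (simp add: s_def)
  have r: "0 \<le> r" "r \<le> 1/2" using assms False by (auto simp: r_def field_simps)
  have "m * t^2 = s^2 * r" "m * t^3 = s^3 * r^2" "m * t^4 = s^4 * r^3"
    using assms by (simp_all add: s_def r_def power_mult_distrib power_divide eval_nat_numeral)
  then have "sens_poly (m * t) (m * t^2) (m * t^3) (m * t^4) = sens_poly s (s^2 * r) (s^3 * r^2) (s^4 * r^3)"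
    by (simp add: s_def)
  also have "\<dots> \<le> ((1 - s/2)^2 + exp 2 * (s/2)^2)^2"
    using sens_poly_le_two_coords[OF s r] by (simp add: sens_poly_two_coords)
  also have "\<dots> \<le> exp (2 * (s/2))^2"
    using sq_one_minus_add_exp2_sq_le_exp[of "s/2"] s by (intro power_mono) auto
  also have "\<dots> = exp (2 * s)" by (simp flip: exp_add add: power2_eq_square)
  finally show ?thesis by (simp add: s_def)
qed

definition power_sum :: "nat \<Rightarrow> real^'n::finite \<Rightarrow> real" where
  "power_sum n y = (\<Sum>i\<in>UNIV. (y $ i)^n)"

definition sens :: "real^'n::finite \<Rightarrow> real" where
  "sens y = sens_poly (power_sum 1 y) (power_sum 2 y) (power_sum 3 y) (power_sum 4 y)"

lemma continuous_on_sens: "continuous_on S sens"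
  unfolding sens_def sens_poly_def power_sum_def by (intro continuous_intros) auto

lemma sens_le_if_positive_coords_equal:
  fixes z :: "real^'n::finite"
  assumes nonneg: "\<And>i. 0 \<le> z $ i" and equal: "\<And>i j. 0 < z $ i \<Longrightarrow> 0 < z $ j \<Longrightarrow> z $ i = z $ j"
  shows "sens z \<le> exp (2 * power_sum 1 z)"
proof -
  define S where "S = {i. 0 < z $ i}"
  show ?thesis
  proof (cases "S = {}")
    case True
    then have "z = 0"
      using nonneg by (simp add: S_def Finite_Cartesian_Product.vec_eq_iff) (meson antisym not_le)
    then show ?thesis by (simp add: sens_def sens_poly_def power_sum_def)
  next
    case False
    then obtain i\<^sub>0 where "i\<^sub>0 \<in> S" by blast
    define t where "t = z $ i\<^sub>0"
    have "z $ i = (if i \<in> S then t else 0)" for i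
      using equal[of i i\<^sub>0] nonneg[of i] \<open>i\<^sub>0 \<in> S\<close> by (auto simp: S_def t_def)
    then have "power_sum n z = (\<Sum>i\<in>UNIV. if i \<in> S then t^n else 0)" if "1 \<le> n" for n
      unfolding power_sum_def using that by (intro sum.cong) auto
    then have "power_sum n z = card S * t^n" if "1 \<le> n" for n
      using that by (simp add: sum.If_cases)
    moreover have "1 \<le> card S" using False by (simp add: Suc_le_eq card_gt_0_iff)
    moreover have "0 \<le> t" using nonneg by (simp add: t_def)
    ultimately show ?thesis
      unfolding sens_def using sens_poly_equal_coords_le[of "card S" t] by simp
  qed
qed

definition pair_shift :: "'n \<Rightarrow> 'n \<Rightarrow> real \<Rightarrow> real^'n::finite \<Rightarrow> real^'n" where
  "pair_shift i j d z =
     (\<chi> k. if k = i then (z $ i + z $ j) / 2 + d else if k = j then (z $ i + z $ j) / 2 - d else z $ k)"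

lemma pair_shift_self: "i \<noteq> j \<Longrightarrow> pair_shift i j ((z $ i - z $ j) / 2) z = z"
  by (auto simp: pair_shift_def Finite_Cartesian_Product.vec_eq_iff field_simps)

lemma power_sum_pair_shift:
  fixes z :: "real^'n::finite"
  assumes "i \<noteq> j"
  shows "power_sum n (pair_shift i j d z)
    = ((z $ i + z $ j) / 2 + d)^n + ((z $ i + z $ j) / 2 - d)^n + (\<Sum>k\<in>UNIV - {i, j}. (z $ k)^n)"
proof -
  have "power_sum n w = (w $ i)^n + (w $ j)^n + (\<Sum>k\<in>UNIV - {i, j}. (w $ k)^n)" for w :: "real^'n"
    unfolding power_sum_def using assms
    by (simp add: sum.remove[of UNIV i] sum.remove[of "UNIV - {i}" j] Diff_insert2[symmetric] insert_commute)
  moreover have "(\<Sum>k\<in>UNIV - {i, j}. (pair_shift i j d z $ k)^n) = (\<Sum>k\<in>UNIV - {i, j}. (z $ k)^n)"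
    by (intro sum.cong) (auto simp: pair_shift_def)
  ultimately show ?thesis using assms by (simp add: pair_shift_def)
qed

lemma power_sum_1_pair_shift: "i \<noteq> j \<Longrightarrow> power_sum 1 (pair_shift i j d z) = power_sum 1 z"
  using power_sum_pair_shift[of i j 1 d z] pair_shift_self[of i j z]
    power_sum_pair_shift[of i j 1 "(z $ i - z $ j) / 2" z] by simp

lemma sens_poly_quadratic:
  fixes a r\<^sub>1 r\<^sub>2 r\<^sub>3 r\<^sub>4 :: real
  obtains B C where "\<And>u. sens_poly (2*a + r\<^sub>1) (r\<^sub>2 + 2*a^2 + 2*u) (r\<^sub>3 + 2*a^3 + 6*a*u)
    (r\<^sub>4 + 2*a^4 + 12*a^2*u + 2*u^2) = (1 + exp 2)^2 * u^2 + B * u + C"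
proof -
  define G where "G u = sens_poly (2*a + r\<^sub>1) (r\<^sub>2 + 2*a^2 + 2*u) (r\<^sub>3 + 2*a^3 + 6*a*u)
    (r\<^sub>4 + 2*a^4 + 12*a^2*u + 2*u^2)" for u
  have "G u = (1 + exp 2)^2 * u^2 + (G 1 - G 0 - (1 + exp 2)^2) * u + G 0" for u
    unfolding G_def sens_poly_def
    by (simp add: field_simps) (simp add: algebra_simps power2_eq_square power3_eq_cube power4_eq_xxxx)
  then show ?thesis using that unfolding G_def by blast
qed

lemma sens_pair_shift_quadratic:
  fixes z :: "real^'n::finite"
  assumes "i \<noteq> j"
  obtains B C where "\<And>d. sens (pair_shift i j d z) = (1 + exp 2)^2 * (d^2)^2 + B * d^2 + C"
proof -
  define a where "a = (z $ i + z $ j) / 2"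
  define R where "R n = (\<Sum>k\<in>UNIV - {i, j}. (z $ k)^n)" for n
  obtain B C where quad: "\<And>u. sens_poly (2*a + R 1) (R 2 + 2*a^2 + 2*u) (R 3 + 2*a^3 + 6*a*u)
    (R 4 + 2*a^4 + 12*a^2*u + 2*u^2) = (1 + exp 2)^2 * u^2 + B * u + C"
    using sens_poly_quadratic by metis
  have "sens (pair_shift i j d z) = (1 + exp 2)^2 * (d^2)^2 + B * d^2 + C" for d
  proof -
    have "(a + d)^2 + (a - d)^2 = 2*a^2 + 2*d^2" "(a + d)^3 + (a - d)^3 = 2*a^3 + 6*a*d^2"
      "(a + d)^4 + (a - d)^4 = 2*a^4 + 12*a^2*d^2 + 2*(d^2)^2"
      by (simp_all add: algebra_simps power2_eq_square power3_eq_cube power4_eq_xxxx)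
    then have "sens (pair_shift i j d z) = sens_poly (2*a + R 1) (R 2 + 2*a^2 + 2*d^2)
      (R 3 + 2*a^3 + 6*a*d^2) (R 4 + 2*a^4 + 12*a^2*d^2 + 2*(d^2)^2)"
      by (simp add: sens_def power_sum_pair_shift[OF assms] a_def[symmetric] R_def add_ac)
    then show ?thesis by (simp only: quad)
  qed
  then show ?thesis by (rule that)
qed

lemma strictly_convex_quadratic_lt_max:
  fixes a b c u U :: "'a::linordered_field"
  assumes "0 < a" "0 < u" "u < U"
  shows "a * u^2 + b * u + c < max c (a * U^2 + b * U + c)"
proof -
  define \<theta> where "\<theta> = u / U"
  have \<theta>: "0 < \<theta>" "\<theta> < 1" and u: "u = \<theta> * U"
    using assms by (auto simp: \<theta>_def field_simps)
  have "a * u^2 + b * u + c = (1 - \<theta>) * c + \<theta> * (a * U^2 + b * U + c) - a * u * (U - u)"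
    unfolding u by (simp add: algebra_simps power2_eq_square)
  also have "\<dots> < (1 - \<theta>) * c + \<theta> * (a * U^2 + b * U + c)"
    using assms by simp
  also have "\<dots> \<le> (1 - \<theta>) * max c (a * U^2 + b * U + c) + \<theta> * max c (a * U^2 + b * U + c)"
    using \<theta> by (intro add_mono mult_left_mono) auto
  finally show ?thesis by (simp add: algebra_simps)
qed

lemma sens_maximiser_positive_coords_equal:
  fixes z :: "real^'n::finite"
  assumes nonneg: "\<And>k. 0 \<le> z $ k"
    and maximal: "\<And>w :: real^'n. (\<And>k. 0 \<le> w $ k) \<Longrightarrow> power_sum 1 w = power_sum 1 z \<Longrightarrow> sens w \<le> sens z"
    and pos: "0 < z $ i" "0 < z $ j"
  shows "z $ i = z $ j"
proof (rule ccontr)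
  assume ne: "z $ i \<noteq> z $ j"
  then have ij: "i \<noteq> j" by auto
  define c where "c = z $ i + z $ j"
  obtain B C where quad: "\<And>d. sens (pair_shift i j d z) = (1 + exp 2)^2 * (d^2)^2 + B * d^2 + C"
    using sens_pair_shift_quadratic[OF ij] by metis
  have feasible: "sens (pair_shift i j d z) \<le> sens z" if "\<bar>d\<bar> \<le> c / 2" for d
  proof (rule maximal)
    show "0 \<le> pair_shift i j d z $ k" for k
      using that[unfolded abs_le_iff c_def] nonneg by (auto simp: pair_shift_def field_simps)
  qed (rule power_sum_1_pair_shift[OF ij])
  define d\<^sub>0 where "d\<^sub>0 = (z $ i - z $ j) / 2"
  have "0 < d\<^sub>0^2" using ne by (simp add: d\<^sub>0_def)
  moreover have "\<bar>d\<^sub>0\<bar> < c / 2" using pos by (simp add: d\<^sub>0_def c_def abs_less_iff field_simps)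
  then have "\<bar>d\<^sub>0\<bar>^2 < (c / 2)^2" by (intro power_strict_mono) auto
  then have "d\<^sub>0^2 < (c / 2)^2" by simp
  moreover have "0 < (1 + exp 2 :: real)^2" using exp_gt_zero[of 2] by (intro zero_less_power) linarith
  ultimately have "sens (pair_shift i j d\<^sub>0 z)
      < max (sens (pair_shift i j 0 z)) (sens (pair_shift i j (c/2) z))"
    using strictly_convex_quadratic_lt_max[of "(1 + exp 2)^2" "d\<^sub>0^2" "(c/2)^2" B C]
    by (simp only: quad) simp
  also have "\<dots> \<le> sens z"
    using feasible[of 0] feasible[of "c/2"] pos by (simp add: c_def)
  finally show False using pair_shift_self[OF ij] by (simp add: d\<^sub>0_def)
qed

lemma sens_le_exp:
  fixes y :: "real^'n::finite"
  assumes "\<And>k. 0 \<le> y $ k"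
  shows "sens y \<le> exp (2 * power_sum 1 y)"
proof -
  define K where "K = {z :: real^'n. (\<forall>k. 0 \<le> z $ k) \<and> power_sum 1 z = power_sum 1 y}"
  have "K = {z. \<forall>k. 0 \<le> z $ k} \<inter> {z. power_sum 1 z = power_sum 1 y}"
    by (auto simp: K_def)
  moreover have "closed {z :: real^'n. power_sum 1 z = power_sum 1 y}"
    unfolding power_sum_def by (intro closed_Collect_eq continuous_intros)
  ultimately have "closed K" using closed_positive_orthant by (metis closed_Int)
  moreover have "bounded K"
  proof -
    have "norm z \<le> power_sum 1 y" if "z \<in> K" for z
      using norm_le_l1_cart[of z] that by (simp add: K_def power_sum_def)
    then show ?thesis by (auto simp: bounded_iff)
  qed
  ultimately have "compact K" by (simp add: compact_eq_bounded_closed)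
  moreover have "y \<in> K" using assms by (simp add: K_def)
  ultimately obtain z where "z \<in> K" and zmax: "\<And>w. w \<in> K \<Longrightarrow> sens w \<le> sens z"
    using continuous_attains_sup[of K sens] continuous_on_sens by blast
  then have "sens z \<le> exp (2 * power_sum 1 z)"
    by (intro sens_le_if_positive_coords_equal sens_maximiser_positive_coords_equal)
      (auto simp: K_def)
  then show ?thesis using zmax \<open>y \<in> K\<close> \<open>z \<in> K\<close> by (force simp: K_def)
qed

section \<open>The Lagrange basis of the model\<close>

definition indicator_vec :: "'n set \<Rightarrow> real^'n::finite" where
  "indicator_vec W = (\<chi> j. if j \<in> W then 1 else 0)"

lemma regf_indicator_vec: "regf V (indicator_vec W) = (if V \<subseteq> W then 1 else 0)"
proof (cases "V \<subseteq> W")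
  case False
  then obtain i where "i \<in> V" "i \<notin> W" by blast
  then show ?thesis unfolding regf_def indicator_vec_def by (auto intro!: prod_zero)
qed (auto simp: regf_def indicator_vec_def intro!: prod.neutral)

lemma regf_scaleR: "regf S (r *\<^sub>R x) = r ^ card S * regf S x"
  by (simp add: regf_def prod.distrib)

lemma idx_downward_closed: "V \<in> idx \<Longrightarrow> U \<subseteq> V \<Longrightarrow> U \<in> idx"
  unfolding idx_def by (auto intro: order.trans[OF card_mono])

lemma idx_eq: "idx = insert {} (range (\<lambda>i. {i})) \<union> {U :: 'n::finite set. card U = 2}"
  unfolding idx_def by (auto simp: le_Suc_eq card_1_singleton_iff numeral_2_eq_2)

lemma sum_idx:
  fixes f :: "'n::finite set \<Rightarrow> 'a::comm_monoid_add"
  shows "(\<Sum>U\<in>idx. f U) = f {} + (\<Sum>i\<in>UNIV. f {i}) + (\<Sum>U | card U = 2. f U)"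
proof -
  let ?A = "insert {} (range (\<lambda>i::'n. {i}))"
  have "(\<Sum>U\<in>idx. f U) = (\<Sum>U\<in>?A. f U) + (\<Sum>U | card U = 2. f U)"
    unfolding idx_eq by (rule sum.union_disjoint) auto
  also have "(\<Sum>U\<in>?A. f U) = f {} + (\<Sum>U\<in>range (\<lambda>i::'n. {i}). f U)"
    by (subst sum.insert) auto
  also have "(\<Sum>U\<in>range (\<lambda>i::'n. {i}). f U) = (\<Sum>i\<in>UNIV. f {i})"
    by (subst sum.reindex) (auto simp: inj_on_def)
  finally show ?thesis .
qed

lemma card_idx: "card (idx :: 'n::finite set set) = 1 + CARD('n) + CARD('n) * (CARD('n) - 1) div 2"
proof -
  have "card {U :: 'n set. card U = 2} = CARD('n) choose 2"
    using n_subsets[of "UNIV :: 'n set" 2] by simp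
  then show ?thesis
    using sum_idx[of "\<lambda>_ :: 'n set. 1 :: nat"] by (simp add: choose_two)
qed

(* Moebius inversion of the monomials over the subset order. *)
definition lagrange :: "'n::finite set \<Rightarrow> real^'n \<Rightarrow> real" where
  "lagrange U y = (\<Sum>V | V \<in> idx \<and> U \<subseteq> V. (-1) ^ card (V - U) * regf V y)"

lemma lagrange_indicator_vec:
  assumes "U \<in> idx" "W \<in> idx"
  shows "lagrange U (indicator_vec W) = (if U = W then 1 else 0)"
proof -
  have "lagrange U (indicator_vec W) = (\<Sum>V | V \<in> idx \<and> U \<subseteq> V. if V \<subseteq> W then (-1) ^ card (V - U) else 0)"
    unfolding lagrange_def regf_indicator_vec by (intro sum.cong) auto
  also have "\<dots> = (\<Sum>V\<in>{V \<in> {V. V \<in> idx \<and> U \<subseteq> V}. V \<subseteq> W}. (-1) ^ card (V - U))"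
    by (rule sum.inter_filter[symmetric]) simp
  also have "{V \<in> {V. V \<in> idx \<and> U \<subseteq> V}. V \<subseteq> W} = {V. U \<subseteq> V \<and> V \<subseteq> W}"
    using assms(2) idx_downward_closed by blast
  finally have "lagrange U (indicator_vec W) = (\<Sum>V | U \<subseteq> V \<and> V \<subseteq> W. (-1) ^ card (V - U))" .
  moreover have "{V. U \<subseteq> V \<and> V \<subseteq> W} = {}" if "\<not> U \<subseteq> W" using that by auto
  ultimately show ?thesis
    using sum_interval_neg_one_power_card_diff_lower[of W U] by (cases "U \<subseteq> W") auto
qed

lemma regf_eq_sum_lagrange:
  fixes y :: "real^'n::finite"
  assumes "S \<in> idx"
  shows "regf S y = (\<Sum>U | U \<in> idx \<and> S \<subseteq> U. lagrange U y)"
proof -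
  have "(\<Sum>U | U \<in> idx \<and> S \<subseteq> U. lagrange U y)
      = (\<Sum>V\<in>idx. \<Sum>U | U \<in> {U. U \<in> idx \<and> S \<subseteq> U} \<and> U \<subseteq> V. (-1) ^ card (V - U) * regf V y)"
    unfolding lagrange_def by (rule sum.swap_restrict) auto
  also have "\<dots> = (\<Sum>V\<in>idx. if V = S then regf V y else 0)"
  proof (intro sum.cong refl)
    fix V :: "'n set" assume "V \<in> idx"
    then have "{U. U \<in> {U. U \<in> idx \<and> S \<subseteq> U} \<and> U \<subseteq> V} = {U. S \<subseteq> U \<and> U \<subseteq> V}"
      using idx_downward_closed by blast
    then have "(\<Sum>U | U \<in> {U. U \<in> idx \<and> S \<subseteq> U} \<and> U \<subseteq> V. (-1) ^ card (V - U) * regf V y)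
        = (\<Sum>U | S \<subseteq> U \<and> U \<subseteq> V. (-1) ^ card (V - U)) * regf V y"
      by (simp add: sum_distrib_right)
    moreover have "{U. S \<subseteq> U \<and> U \<subseteq> V} = {}" if "\<not> S \<subseteq> V" using that by auto
    ultimately show "(\<Sum>U | U \<in> {U. U \<in> idx \<and> S \<subseteq> U} \<and> U \<subseteq> V. (-1) ^ card (V - U) * regf V y)
        = (if V = S then regf V y else 0)"
      using sum_interval_neg_one_power_card_diff_upper[of V S] by (cases "S \<subseteq> V"; cases "S = V") auto
  qed
  also have "\<dots> = regf S y" using assms by simp
  finally show ?thesis by simp
qed

lemma regf_eq_sum_lagrange_nodes:
  fixes x :: "real^'n::finite"
  assumes "S \<in> idx"
  shows "regf S x = (\<Sum>U\<in>idx. lagrange U ((1 / 2) *\<^sub>R x) * regf S (2 *\<^sub>R indicator_vec U))"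
proof -
  have "(\<Sum>U\<in>idx. lagrange U ((1 / 2) *\<^sub>R x) * regf S (2 *\<^sub>R indicator_vec U))
      = (\<Sum>U\<in>idx. 2 ^ card S * (if S \<subseteq> U then lagrange U ((1 / 2) *\<^sub>R x) else 0))"
    by (intro sum.cong) (auto simp: regf_scaleR regf_indicator_vec)
  also have "\<dots> = 2 ^ card S * (\<Sum>U | U \<in> idx \<and> S \<subseteq> U. lagrange U ((1 / 2) *\<^sub>R x))"
    by (simp add: sum_distrib_left sum.inter_filter)
  also have "\<dots> = regf S x"
    by (simp add: regf_eq_sum_lagrange[OF assms, symmetric] regf_scaleR flip: power_mult_distrib)
  finally show ?thesis by simp
qed

lemma lagrange_empty:
  fixes y :: "real^'n::finite"
  shows "lagrange {} y = 1 - power_sum 1 y + ((power_sum 1 y)^2 - power_sum 2 y) / 2"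
proof -
  have "(\<Sum>U | card U = 2. regf U y) = ((power_sum 1 y)^2 - power_sum 2 y) / 2"
    using sum_card2_subsets_prod[of "UNIV :: 'n set" "\<lambda>i. y $ i"] by (simp add: regf_def power_sum_def)
  then show ?thesis
    unfolding lagrange_def by (simp add: sum_idx regf_def power_sum_def sum_negf)
qed

lemma lagrange_singleton:
  fixes y :: "real^'n::finite"
  shows "lagrange {i} y = y $ i * (1 - power_sum 1 y + y $ i)"
proof -
  have split: "{V. V \<in> idx \<and> {i} \<subseteq> V} = insert {i} ((\<lambda>j. {i, j}) ` (UNIV - {i}))"
  proof (intro equalityI subsetI)
    fix V :: "'n set" assume "V \<in> {V. V \<in> idx \<and> {i} \<subseteq> V}"
    then have V: "card V \<le> 2" "i \<in> V" by (auto simp: idx_def)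
    show "V \<in> insert {i} ((\<lambda>j. {i, j}) ` (UNIV - {i}))"
    proof (cases "V = {i}")
      case False
      then obtain j where j: "j \<in> V" "j \<noteq> i" using V by auto
      then have "{i, j} = V" using V by (intro card_seteq) auto
      then show ?thesis using j by auto
    qed simp
  qed (auto simp: idx_def card_insert_if)
  have inj: "inj_on (\<lambda>j. {i, j}) (UNIV - {i})" by (auto simp: inj_on_def doubleton_eq_iff)
  have "lagrange {i} y = y $ i + (\<Sum>j\<in>UNIV - {i}. - (y $ i * y $ j))"
    unfolding lagrange_def split
    by (subst sum.insert) (auto simp: sum.reindex[OF inj] regf_def insert_Diff_if)
  also have "\<dots> = y $ i * (1 - power_sum 1 y + y $ i)"
    by (simp add: sum_negf sum_distrib_left power_sum_def sum_diff1 algebra_simps)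
  finally show ?thesis .
qed

lemma lagrange_card_2:
  fixes y :: "real^'n::finite"
  assumes "card U = 2"
  shows "lagrange U y = regf U y"
proof -
  have "V = U" if "V \<in> idx" "U \<subseteq> V" for V
    using card_seteq[of V U] that assms by (auto simp: idx_def)
  then have "{V. V \<in> idx \<and> U \<subseteq> V} = {U}" using assms by (auto simp: idx_def)
  then show ?thesis by (simp add: lagrange_def)
qed

lemma sum_exp2_lagrange_sq_eq_sens:
  fixes y :: "real^'n::finite"
  shows "(\<Sum>U\<in>idx. exp 2 ^ card U * (lagrange U y)^2) = sens y"
proof -
  define s where "s = power_sum 1 y"
  have "(\<Sum>i\<in>UNIV. (lagrange {i} y)^2)
      = (\<Sum>i\<in>UNIV. (1 - s)^2 * (y $ i)^2 + 2 * (1 - s) * (y $ i)^3 + (y $ i)^4)"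
    unfolding lagrange_singleton s_def[symmetric]
    by (intro sum.cong refl) (simp add: power2_eq_square power3_eq_cube power4_eq_xxxx algebra_simps)
  also have "\<dots> = (1 - s)^2 * power_sum 2 y + 2 * (1 - s) * power_sum 3 y + power_sum 4 y"
    by (simp add: sum.distrib power_sum_def flip: sum_distrib_left)
  finally have singletons: "(\<Sum>i\<in>UNIV. (lagrange {i} y)^2)
      = (1 - s)^2 * power_sum 2 y + 2 * (1 - s) * power_sum 3 y + power_sum 4 y" .
  have "(\<Sum>U | card U = 2. (lagrange U y)^2) = (\<Sum>U | U \<subseteq> UNIV \<and> card U = 2. \<Prod>i\<in>U. (y $ i)^2)"
    by (intro sum.cong) (auto simp: lagrange_card_2 regf_def prod_power_distrib)
  also have "\<dots> = ((power_sum 2 y)^2 - power_sum 4 y) / 2"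
    by (subst sum_card2_subsets_prod) (simp_all add: power_sum_def flip: power_mult)
  finally have pairs: "(\<Sum>U | card U = 2. (lagrange U y)^2) = ((power_sum 2 y)^2 - power_sum 4 y) / 2" .
  have "(\<Sum>U\<in>idx. exp 2 ^ card U * (lagrange U y)^2) = (lagrange {} y)^2
      + exp 2 * (\<Sum>i\<in>UNIV. (lagrange {i} y)^2) + (exp 2)^2 * (\<Sum>U | card U = 2. (lagrange U y)^2)"
    unfolding sum_idx by (simp add: sum_distrib_left)
  also have "\<dots> = sens y"
    unfolding singletons pairs lagrange_empty sens_def sens_poly_def s_def times_divide_eq_right
    by (rule refl)
  finally show ?thesis .
qed

lemma intensity_eq_exp_minus_power_sum:
  assumes "\<And>S. \<beta> S = (if card S = 1 then -1 else 0)"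
  shows "intensity \<beta> x = exp (- power_sum 1 x)"
proof -
  have "(\<Sum>S\<in>idx. \<beta> S * regf S x) = - power_sum 1 x"
    unfolding sum_idx by (simp add: assms regf_def power_sum_def sum_negf)
  then show ?thesis by (simp add: intensity_def)
qed

lemma intensity_node:
  fixes \<beta> :: "'n::finite set \<Rightarrow> real" and U :: "'n set"
  assumes "\<And>S. \<beta> S = (if card S = 1 then -1 else 0)"
  shows "intensity \<beta> (2 *\<^sub>R indicator_vec U) = inverse (exp 2 ^ card U)"
proof -
  have "power_sum 1 (2 *\<^sub>R indicator_vec U) = (\<Sum>i\<in>UNIV. if i \<in> U then 2 else 0 :: real)"
    unfolding power_sum_def indicator_vec_def by (intro sum.cong) auto
  also have "\<dots> = real (card U) * 2" by (simp add: sum.If_cases)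
  finally have "intensity \<beta> (2 *\<^sub>R indicator_vec U) = exp (- (real (card U) * 2))"
    by (simp add: intensity_eq_exp_minus_power_sum[OF assms])
  also have "\<dots> = inverse (exp 2 ^ card U)"
    by (simp only: exp_minus exp_of_nat_mult)
  finally show ?thesis .
qed

theorem intensity_mul_sum_lagrange_sq_le_1:
  fixes x :: "real^'n::finite"
  assumes \<beta>: "\<And>S. \<beta> S = (if card S = 1 then -1 else 0)" and x: "\<And>i. 0 \<le> x $ i"
  shows "intensity \<beta> x * (\<Sum>U\<in>idx. (lagrange U ((1 / 2) *\<^sub>R x))^2 / intensity \<beta> (2 *\<^sub>R indicator_vec U)) \<le> 1"
proof -
  have "(\<Sum>U\<in>idx. (lagrange U ((1 / 2) *\<^sub>R x))^2 / intensity \<beta> (2 *\<^sub>R indicator_vec U))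
      = (\<Sum>U\<in>idx. exp 2 ^ card U * (lagrange U ((1 / 2) *\<^sub>R x))^2)"
    by (intro sum.cong refl) (simp only: intensity_node[OF \<beta>] divide_inverse inverse_inverse_eq mult.commute)
  also have "\<dots> = sens ((1 / 2) *\<^sub>R x)" by (rule sum_exp2_lagrange_sq_eq_sens)
  also have "\<dots> \<le> exp (2 * power_sum 1 ((1 / 2) *\<^sub>R x))" using x by (intro sens_le_exp) simp
  also have "2 * power_sum 1 ((1 / 2) *\<^sub>R x) = power_sum 1 x"
    unfolding power_sum_def by (simp add: sum_distrib_left)
  finally have "intensity \<beta> x * (\<Sum>U\<in>idx. (lagrange U ((1 / 2) *\<^sub>R x))^2 / intensity \<beta> (2 *\<^sub>R indicator_vec U))
      \<le> exp (- power_sum 1 x) * exp (power_sum 1 x)"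
    unfolding intensity_eq_exp_minus_power_sum[OF \<beta>] by (rule mult_left_mono) simp
  then show ?thesis by (simp flip: exp_add)
qed

section \<open>The information matrix\<close>

lemma indicator_vec_eq_iff: "indicator_vec U = (indicator_vec V :: real^'n::finite) \<longleftrightarrow> U = V"
proof
  assume eq: "indicator_vec U = (indicator_vec V :: real^'n)"
  have "j \<in> U \<longleftrightarrow> j \<in> V" for j
    using arg_cong[OF eq, of "\<lambda>z. z $ j"] by (simp add: indicator_vec_def split: if_splits)
  then show "U = V" by blast
qed simp

lemma inj_on_nodes: "inj_on (\<lambda>U. 2 *\<^sub>R indicator_vec U :: real^'n::finite) A"
  by (rule inj_onI) (simp add: indicator_vec_eq_iff)

definition lagrange_info ::
  "('n::finite set \<Rightarrow> real) \<Rightarrow> (real^'n) set \<Rightarrow> (real^'n \<Rightarrow> real) \<Rightarrow> 'n set \<Rightarrow> 'n set \<Rightarrow> real" where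
  "lagrange_info \<beta> D w U V
     = (\<Sum>x\<in>D. w x * intensity \<beta> x * lagrange U ((1 / 2) *\<^sub>R x) * lagrange V ((1 / 2) *\<^sub>R x))"

lemma info_matrix_eq_lagrange_info:
  fixes \<beta> :: "'n::finite set \<Rightarrow> real"
  assumes "S \<in> idx" "T \<in> idx"
  shows "info_matrix \<beta> D w S T = (\<Sum>U\<in>idx. regf S (2 *\<^sub>R indicator_vec U)
    * (\<Sum>V\<in>idx. lagrange_info \<beta> D w U V * regf T (2 *\<^sub>R indicator_vec V)))"
proof -
  define F where "F U S = regf S (2 *\<^sub>R indicator_vec U :: real^'n)" for U S
  define lag where "lag U x = lagrange U ((1 / 2) *\<^sub>R x)" for U and x :: "real^'n"
  define c where "c x = w x * intensity \<beta> x" for x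
  have "info_matrix \<beta> D w S T = (\<Sum>x\<in>D. c x * (\<Sum>U\<in>idx. lag U x * F U S) * (\<Sum>V\<in>idx. lag V x * F V T))"
    unfolding info_matrix_def c_def lag_def F_def
    by (simp add: mult.assoc
        flip: regf_eq_sum_lagrange_nodes[OF assms(1)] regf_eq_sum_lagrange_nodes[OF assms(2)])
  also have "\<dots> = (\<Sum>x\<in>D. \<Sum>U\<in>idx. \<Sum>V\<in>idx. F U S * (c x * lag U x * lag V x * F V T))"
    by (simp add: sum_distrib_left sum_distrib_right ac_simps)
  also have "\<dots> = (\<Sum>U\<in>idx. \<Sum>V\<in>idx. \<Sum>x\<in>D. F U S * (c x * lag U x * lag V x * F V T))"
    by (subst sum.swap) (simp add: sum.swap[of _ D])
  also have "\<dots> = (\<Sum>U\<in>idx. F U S * (\<Sum>V\<in>idx. lagrange_info \<beta> D w U V * F V T))"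
    by (simp add: lagrange_info_def c_def lag_def sum_distrib_left sum_distrib_right ac_simps)
  finally show ?thesis by (simp add: F_def)
qed

lemma det_info_matrix:
  fixes \<beta> :: "'n::finite set \<Rightarrow> real"
  shows "det_on idx (info_matrix \<beta> D w)
    = (det_on idx (\<lambda>U S. regf S (2 *\<^sub>R indicator_vec U :: real^'n)))^2 * det_on idx (lagrange_info \<beta> D w)"
proof -
  define F where "F U S = regf S (2 *\<^sub>R indicator_vec U :: real^'n)" for U S
  have "det_on idx (info_matrix \<beta> D w)
      = det_on idx (\<lambda>S T. \<Sum>U\<in>idx. F U S * (\<Sum>V\<in>idx. lagrange_info \<beta> D w U V * F V T))"
    unfolding F_def by (rule det_on_cong) (rule info_matrix_eq_lagrange_info)
  also have "\<dots> = det_on idx (\<lambda>S U. F U S) * det_on idx (\<lambda>U T. \<Sum>V\<in>idx. lagrange_info \<beta> D w U V * F V T)"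
    by (rule det_on_mult) simp
  also have "det_on idx (\<lambda>U T. \<Sum>V\<in>idx. lagrange_info \<beta> D w U V * F V T)
      = det_on idx (lagrange_info \<beta> D w) * det_on idx F"
    by (rule det_on_mult) simp
  also have "det_on idx (\<lambda>S U. F U S) = det_on idx F" by (rule det_on_transpose) simp
  finally show ?thesis by (simp add: F_def[abs_def] power2_eq_square)
qed

lemma lagrange_info_nodes:
  fixes \<beta> :: "'n::finite set \<Rightarrow> real"
  assumes "U \<in> idx" "V \<in> idx"
  shows "lagrange_info \<beta> ((\<lambda>W. 2 *\<^sub>R indicator_vec W) ` idx) (\<lambda>_. c) U V
    = (if U = V then c * intensity \<beta> (2 *\<^sub>R indicator_vec U) else 0)"
proof -
  have "lagrange_info \<beta> ((\<lambda>W. 2 *\<^sub>R indicator_vec W) ` idx) (\<lambda>_. c) U V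
      = (\<Sum>W\<in>idx. c * intensity \<beta> (2 *\<^sub>R indicator_vec W)
          * lagrange U (indicator_vec W) * lagrange V (indicator_vec W))"
    by (simp add: lagrange_info_def sum.reindex[OF inj_on_nodes])
  also have "\<dots> = (\<Sum>W\<in>idx. if W = U then (if U = V then c * intensity \<beta> (2 *\<^sub>R indicator_vec U) else 0) else 0)"
    using assms by (intro sum.cong refl) (auto simp: lagrange_indicator_vec)
  finally show ?thesis using assms(1) by simp
qed

lemma det_lagrange_info_nodes:
  fixes \<beta> :: "'n::finite set \<Rightarrow> real"
  shows "det_on idx (lagrange_info \<beta> ((\<lambda>U. 2 *\<^sub>R indicator_vec U) ` idx) (\<lambda>_. 1 / card (idx :: 'n set set)))
    = (\<Prod>U\<in>idx. intensity \<beta> (2 *\<^sub>R indicator_vec U) / card (idx :: 'n set set))"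
proof -
  have "det_on idx (lagrange_info \<beta> ((\<lambda>U. 2 *\<^sub>R indicator_vec U) ` idx) (\<lambda>_. 1 / card (idx :: 'n set set)))
      = det_on idx (\<lambda>U V. if U = V then intensity \<beta> (2 *\<^sub>R indicator_vec U) / card (idx :: 'n set set) else 0)"
    by (rule det_on_cong) (simp add: lagrange_info_nodes)
  then show ?thesis by (simp add: det_on_diagonal)
qed

lemma sum_lagrange_info_diag_le_1:
  fixes \<beta> :: "'n::finite set \<Rightarrow> real"
  assumes \<beta>: "\<And>S. \<beta> S = (if card S = 1 then -1 else 0)"
    and design: "is_design {x. \<forall>i. 0 \<le> x $ i} D w"
  shows "(\<Sum>U\<in>idx. lagrange_info \<beta> D w U U / intensity \<beta> (2 *\<^sub>R indicator_vec U)) \<le> 1"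
proof -
  have w: "\<And>x. x \<in> D \<Longrightarrow> 0 \<le> w x" "sum w D = 1" and nonneg: "\<And>x i. x \<in> D \<Longrightarrow> 0 \<le> x $ i"
    using design by (auto simp: is_design_def)
  have "(\<Sum>U\<in>idx. lagrange_info \<beta> D w U U / intensity \<beta> (2 *\<^sub>R indicator_vec U))
      = (\<Sum>U\<in>idx. \<Sum>x\<in>D. w x * (intensity \<beta> x
          * ((lagrange U ((1 / 2) *\<^sub>R x))^2 / intensity \<beta> (2 *\<^sub>R indicator_vec U))))"
    unfolding lagrange_info_def sum_divide_distrib
    by (intro sum.cong refl) (simp add: times_divide_eq_right mult.assoc power2_eq_square)
  also have "\<dots> = (\<Sum>x\<in>D. w x * (intensity \<beta> x
      * (\<Sum>U\<in>idx. (lagrange U ((1 / 2) *\<^sub>R x))^2 / intensity \<beta> (2 *\<^sub>R indicator_vec U))))"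
    by (simp add: sum.swap[of _ idx] sum_distrib_left)
  also have "\<dots> \<le> (\<Sum>x\<in>D. w x * 1)"
    using w(1) nonneg by (intro sum_mono mult_left_mono intensity_mul_sum_lagrange_sq_le_1[OF \<beta>]) auto
  finally show ?thesis using w(2) by simp
qed

lemma det_lagrange_info_le:
  fixes \<beta> :: "'n::finite set \<Rightarrow> real"
  assumes \<beta>: "\<And>S. \<beta> S = (if card S = 1 then -1 else 0)"
    and design: "is_design {x. \<forall>i. 0 \<le> x $ i} D w"
  shows "det_on idx (lagrange_info \<beta> D w)
    \<le> (\<Prod>U\<in>idx. intensity \<beta> (2 *\<^sub>R indicator_vec U) / card (idx :: 'n set set))"
proof -
  define p where "p = card (idx :: 'n set set)"
  define \<mu> where "\<mu> U = intensity \<beta> (2 *\<^sub>R indicator_vec U :: real^'n)" for U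
  define d where "d U = lagrange_info \<beta> D w U U / \<mu> U" for U
  have \<mu>: "0 < \<mu> U" for U by (simp add: \<mu>_def intensity_def)
  have D: "finite D" and w: "\<And>x. x \<in> D \<Longrightarrow> 0 \<le> w x"
    using design by (auto simp: is_design_def)
  have "det_on idx (lagrange_info \<beta> D w) \<le> (\<Prod>U\<in>idx. lagrange_info \<beta> D w U U)"
    unfolding lagrange_info_def
    using det_on_gram_le_prod_diag[of idx D "\<lambda>x. w x * intensity \<beta> x" "\<lambda>x U. lagrange U ((1 / 2) *\<^sub>R x)"]
      D w by (simp add: power2_eq_square mult.assoc intensity_def)
  also have "\<dots> = (\<Prod>U\<in>idx. \<mu> U) * (\<Prod>U\<in>idx. d U)"
  proof -
    have "lagrange_info \<beta> D w U U = \<mu> U * d U" for U using \<mu>[of U] by (simp add: d_def)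
    then show ?thesis by (simp add: prod.distrib)
  qed
  also have "(\<Prod>U\<in>idx. d U) \<le> (1 / p) ^ p"
  proof -
    have d_nonneg: "0 \<le> d U" for U
      unfolding d_def lagrange_info_def using \<mu>[of U] w
      by (intro divide_nonneg_pos sum_nonneg) (auto simp: intensity_def mult.assoc)
    have "(\<Sum>U\<in>idx. d U) \<le> 1"
      unfolding d_def \<mu>_def by (rule sum_lagrange_info_diag_le_1[OF \<beta> design])
    then have "((\<Sum>U\<in>idx. d U) / p) ^ p \<le> (1 / p) ^ p"
      using d_nonneg by (intro power_mono divide_right_mono divide_nonneg_nonneg sum_nonneg) auto
    then show ?thesis
      using prod_le_mean_power[of idx d] d_nonneg by (simp add: p_def)
  qed
  then have "(\<Prod>U\<in>idx. \<mu> U) * (\<Prod>U\<in>idx. d U) \<le> (\<Prod>U\<in>idx. \<mu> U) * (1 / p) ^ p"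
    using \<mu> by (intro mult_left_mono prod_nonneg) (auto intro: less_imp_le)
  also have "\<dots> = (\<Prod>U\<in>idx. \<mu> U / p)"
    by (simp add: prod_dividef p_def power_one_over)
  finally show ?thesis by (simp add: \<mu>_def p_def)
qed

lemma design_points_eq_nodes:
  "{0} \<union> {axis i 2 | i. True} \<union> {axis i 2 + axis j 2 | i j. i \<noteq> j}
    = (\<lambda>U. 2 *\<^sub>R indicator_vec U) ` (idx :: 'n::finite set set)"
proof -
  have node: "2 *\<^sub>R indicator_vec U = (\<Sum>i\<in>U. axis i 2 :: real^'n)" for U
    by (simp add: indicator_vec_def Finite_Cartesian_Product.vec_eq_iff sum_component axis_def
        sum.If_cases[where P = "\<lambda>i. i = _"] cong: if_cong)
  have "0 \<in> (\<lambda>U. 2 *\<^sub>R indicator_vec U) ` (idx :: 'n set set)"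
    by (rule image_eqI[of _ _ "{}"]) (simp_all add: node idx_def)
  moreover have "axis i 2 \<in> (\<lambda>U. 2 *\<^sub>R indicator_vec U) ` (idx :: 'n set set)" for i
    by (rule image_eqI[of _ _ "{i}"]) (simp_all add: node idx_def)
  moreover have "axis i 2 + axis j 2 \<in> (\<lambda>U. 2 *\<^sub>R indicator_vec U) ` (idx :: 'n set set)" if "i \<noteq> j" for i j
    by (rule image_eqI[of _ _ "{i, j}"]) (use that in \<open>simp_all add: node idx_def\<close>)
  moreover have "(\<lambda>U. 2 *\<^sub>R indicator_vec U) ` (idx :: 'n set set)
      \<subseteq> {0} \<union> {axis i 2 | i. True} \<union> {axis i 2 + axis j 2 | i j. i \<noteq> j}"
    unfolding idx_eq by (auto simp: node card_2_iff)
  ultimately show ?thesis by blast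
qed

theorem theorem5:
  fixes \<beta> :: "'n::finite set \<Rightarrow> real"
  assumes "CARD('n) \<ge> 3"
    and "\<And>S. \<beta> S = (if card S = 1 then -1 else 0)"
  shows "locally_D_optimal \<beta> {x :: real ^ 'n. \<forall>i. 0 \<le> x $ i}
           ({0} \<union> {axis i 2 | i. True} \<union> {axis i 2 + axis j 2 | i j. i \<noteq> j})
           (\<lambda>_. 1 / (1 + real CARD('n) + real CARD('n) * (real CARD('n) - 1) / 2))"
proof -
  let ?X = "{x :: real ^ 'n. \<forall>i. 0 \<le> x $ i}"
  let ?nodes = "(\<lambda>U. 2 *\<^sub>R indicator_vec U) ` (idx :: 'n set set)"
  let ?w = "\<lambda>_ :: real^'n. 1 / card (idx :: 'n set set)"
  have p: "real (card (idx :: 'n set set)) = 1 + real CARD('n) + real CARD('n) * (real CARD('n) - 1) / 2"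
    unfolding card_idx by (simp add: real_of_nat_div of_nat_diff)
  have "{} \<in> (idx :: 'n set set)" by (simp add: idx_def)
  then have "card (idx :: 'n set set) \<noteq> 0" by auto
  then have "is_design ?X ?nodes ?w"
    using card_image[OF inj_on_nodes, of "idx :: 'n set set"]
    by (auto simp: is_design_def indicator_vec_def)
  moreover have "det_on idx (info_matrix \<beta> D w) \<le> det_on idx (info_matrix \<beta> ?nodes ?w)"
    if "is_design ?X D w" for D w
    unfolding det_info_matrix det_lagrange_info_nodes
    by (intro mult_left_mono det_lagrange_info_le[OF assms(2) that]) simp
  ultimately show ?thesis
    unfolding locally_D_optimal_def design_points_eq_nodes p[symmetric] by blast
qed

end
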